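(* Let $q$ be a prime power and $b,k,t$ positive integers. For the $b$-symbol weight function $wt_b$ on $\mathbb{F}_q^k$, $r_b^{wt_b}(k,t)\ge 2t-b+1$.
   Context: For $\boldsymbol{z}=(z_0,\ldots,z_{n-1}),\boldsymbol{w}\in\mathbb{F}_q^n$, $d_b(\boldsymbol{z},\boldsymbol{w})$ is the number of $i\in\{0,\ldots,n-1\}$ with $(z_i,\ldots,z_{i+b-1})\ne(w_i,\ldots,w_{i+b-1})$ (indices mod $n$), and $wt_b(\boldsymbol{x})=d_b(\boldsymbol{x},\boldsymbol{0})$. A systematic encoding $\mathrm{Enc}(\boldsymbol{x})=(\boldsymbol{x},p(\boldsymbol{x}))\in\mathbb{F}_q^{k+r}$ is a function-correcting $b$-symbol code for $f$ if $d_b(\mathrm{Enc}(\boldsymbol{x}_1),\mathrm{Enc}(\boldsymbol{x}_2))\ge 2t+1$ whenever $f(\boldsymbol{x}_1)\ne f(\boldsymbol{x}_2)$; $r_b^f(k,t)$ is the smallest $r$ for which one exists. The paper's standing assumptions are $2<b<k$ and $t>\lfloor\frac{b-1}{2}\rfloor$. *)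

theory Defs
  imports Main
begin

text \<open>Vectors in F_q^n are lists of length n over a finite field type 'q.
  Indices are taken modulo the length n (cyclic b-symbol read).\<close>

definition bsym_dist :: "nat \<Rightarrow> 'q list \<Rightarrow> 'q list \<Rightarrow> nat" where
  "bsym_dist b z w =
     card {i. i < length z \<and>
              (map (\<lambda>j. z ! ((i + j) mod length z)) [0..<b]
               \<noteq> map (\<lambda>j. w ! ((i + j) mod length z)) [0..<b])}"

definition bsym_wt :: "nat \<Rightarrow> 'q::zero list \<Rightarrow> nat" where
  "bsym_wt b x = bsym_dist b x (replicate (length x) 0)"

definition is_fc_bsym_code ::
  "nat \<Rightarrow> ('q list \<Rightarrow> 'c) \<Rightarrow> nat \<Rightarrow> nat \<Rightarrow> nat \<Rightarrow> ('q list \<Rightarrow> 'q list) \<Rightarrow> bool" where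
  "is_fc_bsym_code b f k r t p \<longleftrightarrow>
     (\<forall>x. length x = k \<longrightarrow> length (p x) = r) \<and>
     (\<forall>x1 x2. length x1 = k \<longrightarrow> length x2 = k \<longrightarrow> f x1 \<noteq> f x2 \<longrightarrow>
        bsym_dist b (x1 @ p x1) (x2 @ p x2) \<ge> 2 * t + 1)"

definition opt_redundancy ::
  "nat \<Rightarrow> ('q list \<Rightarrow> 'c) \<Rightarrow> nat \<Rightarrow> nat \<Rightarrow> nat" where
  "opt_redundancy b f k t = (LEAST r. \<exists>p. is_fc_bsym_code b f k r t p)"

end

theory Submission
  imports Defs
begin

text \<open>Let \<open>e\<close> be the last unit vector of \<open>F_q^k\<close>. Since \<open>wt_b(0) = 0 \<noteq> wt_b(e)\<close>, the
  codewords \<open>(0, p(0))\<close> and \<open>(e, p(e))\<close> must be at \<open>b\<close>-symbol distance at least \<open>2t + 1\<close>.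
  But they agree on the first \<open>k - 1\<close> coordinates, so only the \<open>b\<close>-windows starting at
  one of the last \<open>r + b\<close> positions can differ; hence \<open>2t + 1 \<le> r + b\<close>. The least
  redundancy exists because repeating the message \<open>2t\<close> times gives a code for any \<open>f\<close>.\<close>

definition hamming_dist :: "'a list \<Rightarrow> 'a list \<Rightarrow> nat" where
  "hamming_dist z w = card {i. i < length z \<and> z ! i \<noteq> w ! i}"

lemma hamming_dist_le_bsym_dist:
  assumes "0 < b"
  shows "hamming_dist z w \<le> bsym_dist b z w"
  unfolding hamming_dist_def bsym_dist_def
proof (rule card_mono)
  show "{i. i < length z \<and> z ! i \<noteq> w ! i} \<subseteq>
    {i. i < length z \<and> map (\<lambda>j. z ! ((i + j) mod length z)) [0..<b]
                       \<noteq> map (\<lambda>j. w ! ((i + j) mod length z)) [0..<b]}"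
  proof safe
    fix i assume "i < length z" "z ! i \<noteq> w ! i"
      and windows_eq: "map (\<lambda>j. z ! ((i + j) mod length z)) [0..<b] = map (\<lambda>j. w ! ((i + j) mod length z)) [0..<b]"
    from windows_eq[THEN arg_cong[where f = "\<lambda>l. l ! 0"]] show False
      using assms \<open>i < length z\<close> \<open>z ! i \<noteq> w ! i\<close> by simp
  qed
qed simp

lemma nth_concat_replicate:
  assumes "i < n * length x"
  shows "concat (replicate n x) ! i = x ! (i mod length x)"
  using assms
proof (induction n arbitrary: i)
  case (Suc n)
  show ?case
  proof (cases "i < length x")
    case False
    then have "concat (replicate n x) ! (i - length x) = x ! ((i - length x) mod length x)"
      using Suc by (intro Suc.IH) auto
    then show ?thesis
      using False by (simp add: nth_append le_mod_geq)
  qed (simp add: nth_append)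
qed simp

lemma hamming_dist_concat_replicate_ge:
  assumes "length x = length y" and "x \<noteq> y"
  shows "n \<le> hamming_dist (concat (replicate n x)) (concat (replicate n y))"
proof -
  obtain i where i: "i < length x" "x ! i \<noteq> y ! i"
    using assms nth_equalityI by blast
  have "inj_on (\<lambda>c. i + c * length x) {..<n}"
    using i by (intro inj_onI) auto
  then have "n = card ((\<lambda>c. i + c * length x) ` {..<n})"
    by (simp add: card_image)
  also have "\<dots> \<le> hamming_dist (concat (replicate n x)) (concat (replicate n y))"
    unfolding hamming_dist_def
  proof (rule card_mono)
    show "(\<lambda>c. i + c * length x) ` {..<n} \<subseteq>
      {m. m < length (concat (replicate n x)) \<and> concat (replicate n x) ! m \<noteq> concat (replicate n y) ! m}"
    proof clarify
      fix c assume "c < n"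
      then have "(c + 1) * length x \<le> n * length x"
        by (intro mult_le_mono1) simp
      then have "i + c * length x < n * length x"
        using i(1) by simp
      then show "i + c * length x < length (concat (replicate n x)) \<and>
        concat (replicate n x) ! (i + c * length x) \<noteq> concat (replicate n y) ! (i + c * length x)"
        using i assms(1) by (simp add: nth_concat_replicate length_concat sum_list_replicate)
    qed
  qed simp
  finally show ?thesis .
qed

lemma bsym_dist_self: "bsym_dist b z z = 0"
  by (simp add: bsym_dist_def)

lemma bsym_wt_eq_0_iff:
  assumes "0 < b"
  shows "bsym_wt b x = 0 \<longleftrightarrow> x = replicate (length x) 0"
proof
  assume "bsym_wt b x = 0"
  then have "hamming_dist x (replicate (length x) 0) = 0"
    using hamming_dist_le_bsym_dist[OF assms] unfolding bsym_wt_def by (metis le_zero_eq)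
  then show "x = replicate (length x) 0"
    unfolding hamming_dist_def by (intro nth_equalityI) auto
next
  assume "x = replicate (length x) 0"
  then show "bsym_wt b x = 0"
    unfolding bsym_wt_def by (metis bsym_dist_self)
qed

text \<open>No hypothesis \<open>m \<le> length z\<close> is needed, since \<open>(i + j) mod n \<le> i + j\<close>.\<close>
lemma bsym_dist_le_of_eq_prefix:
  assumes "\<forall>i < m. z ! i = w ! i"
  shows "bsym_dist b z w \<le> length z - (m + 1 - b)"
proof -
  define differ where "differ i \<longleftrightarrow> map (\<lambda>j. z ! ((i + j) mod length z)) [0..<b]
                                   \<noteq> map (\<lambda>j. w ! ((i + j) mod length z)) [0..<b]" for i
  have "m + 1 - b \<le> i" if "differ i" for i
  proof (rule ccontr)
    assume "\<not> m + 1 - b \<le> i"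
    then have "(i + j) mod length z < m" if "j < b" for j
      using that mod_less_eq_dividend[of "i + j" "length z"] by linarith
    then have "\<not> differ i"
      using assms by (simp add: differ_def)
    then show False
      using \<open>differ i\<close> by contradiction
  qed
  then have "{i. i < length z \<and> differ i} \<subseteq> {m + 1 - b..<length z}"
    by auto
  then have "card {i. i < length z \<and> differ i} \<le> length z - (m + 1 - b)"
    using card_mono[OF finite_atLeastLessThan] by fastforce
  then show ?thesis
    by (simp add: bsym_dist_def differ_def)
qed

lemma is_fc_bsym_code_repetition:
  assumes "0 < b"
  shows "is_fc_bsym_code b f k (2 * t * k) t (\<lambda>x. concat (replicate (2 * t) x))"
  unfolding is_fc_bsym_code_def
proof (intro conjI allI impI)
  fix x :: "'a list" assume "length x = k"
  then show "length (concat (replicate (2 * t) x)) = 2 * t * k"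
    by (simp add: length_concat sum_list_replicate)
next
  fix x1 x2 :: "'a list"
  assume "length x1 = k" "length x2 = k" "f x1 \<noteq> f x2"
  then have "2 * t + 1 \<le> hamming_dist (concat (replicate (2 * t + 1) x1))
                                       (concat (replicate (2 * t + 1) x2))"
    by (intro hamming_dist_concat_replicate_ge) auto
  also have "\<dots> \<le> bsym_dist b (x1 @ concat (replicate (2 * t) x1)) (x2 @ concat (replicate (2 * t) x2))"
    using hamming_dist_le_bsym_dist[OF assms] by simp
  finally show "2 * t + 1 \<le> bsym_dist b (x1 @ concat (replicate (2 * t) x1))
                                         (x2 @ concat (replicate (2 * t) x2))" .
qed

lemma is_fc_bsym_code_opt_redundancy:
  assumes "0 < b"
  obtains p where "is_fc_bsym_code b f k (opt_redundancy b f k t) t p"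
  using LeastI_ex[of "\<lambda>r. \<exists>p. is_fc_bsym_code b f k r t p"] is_fc_bsym_code_repetition[OF assms]
  unfolding opt_redundancy_def by blast

lemma is_fc_bsym_code_bsym_wt_redundancy_ge:
  fixes p :: "'q::zero_neq_one list \<Rightarrow> 'q list"
  assumes "0 < b" and "0 < k" and code: "is_fc_bsym_code b (bsym_wt b) k r t p"
  shows "2 * t + 1 \<le> r + b"
proof -
  define zero :: "'q list" where "zero = replicate k 0"
  define e :: "'q list" where "e = replicate (k - 1) 0 @ [1]"
  have lengths: "length zero = k" "length e = k"
    using assms(2) by (auto simp: zero_def e_def)
  have "bsym_wt b zero = 0"
    using bsym_wt_eq_0_iff[OF assms(1), of zero] lengths(1) by (simp add: zero_def)
  moreover have "e ! (k - 1) \<noteq> replicate k 0 ! (k - 1)"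
    using assms(2) by (simp add: e_def nth_append)
  then have "bsym_wt b e \<noteq> 0"
    using bsym_wt_eq_0_iff[OF assms(1), of e] lengths(2) by metis
  ultimately have "2 * t + 1 \<le> bsym_dist b (zero @ p zero) (e @ p e)"
    using code lengths unfolding is_fc_bsym_code_def by simp
  also have "\<dots> \<le> length (zero @ p zero) - (k - 1 + 1 - b)"
  proof (rule bsym_dist_le_of_eq_prefix, intro allI impI)
    fix i assume "i < k - 1"
    then show "(zero @ p zero) ! i = (e @ p e) ! i"
      by (auto simp: nth_append zero_def e_def)
  qed
  also have "\<dots> \<le> r + b"
    using code lengths unfolding is_fc_bsym_code_def by simp
  finally show ?thesis .
qed

theorem mainTheorem19:
  fixes b k t :: nat
  assumes "2 < b" and "b < k" and "t > (b - 1) div 2"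
  shows "int (opt_redundancy b (bsym_wt b :: 'q::{finite,field} list \<Rightarrow> nat) k t)
           \<ge> 2 * int t - int b + 1"
proof -
  have "0 < b" "0 < k"
    using assms(1,2) by simp_all
  obtain p :: "'q list \<Rightarrow> 'q list"
    where "is_fc_bsym_code b (bsym_wt b) k (opt_redundancy b (bsym_wt b :: 'q list \<Rightarrow> nat) k t) t p"
    using is_fc_bsym_code_opt_redundancy[OF \<open>0 < b\<close>] by blast
  from is_fc_bsym_code_bsym_wt_redundancy_ge[OF \<open>0 < b\<close> \<open>0 < k\<close> this] show ?thesis
    by linarith
qed

end
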